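(* Let $0\le q\in L_1^{loc}(\mathbb{R})$ and assume there is $a\in(0,\infty)$ with $\inf_{x\in\mathbb{R}}\int_{x-a}^{x+a}q(t)\,dt>0$. Suppose there exist $\alpha\ge1$, $\beta>0$ and $X>0$ such that for all $|x|\ge X$, $$\frac1\alpha\le\frac{d(t)}{d(x)}\le\alpha\quad\text{whenever }|t-x|\le\beta.$$ Then for each $p\in(1,\infty]$ there exist constants $c,c(p)\in(0,\infty)$ such that for all $x\in\mathbb{R}$, $$c^{-1}d(x)^{1/p'}\le G_p(x)\le c(p)\,d(x)^{1/p'},\qquad p'=\tfrac{p}{p-1}\ (p'=1\text{ if }p=\infty).$$
   Context: For $x\in\mathbb{R}$, $d(x)=\inf\{d>0:\int_{x-d}^{x+d}q(t)\,dt=2\}$ (well defined since $\int_{\mathbb{R}}q=\infty$ under the hypotheses). $L_\infty(\mathbb{R})$ denotes $C(\mathbb{R})$, bounded continuous functions with the sup norm. $D_p$ is the set of all solutions $y\in L_p(\mathbb{R})$ of $-y'(x)+q(x)y(x)=f(x)$, $x\in\mathbb{R}$, with $\|f\|_p=1$, and $G_p(x)=\sup_{y\in D_p}|y(x)|$. *)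

theory Defs
  imports "HOL-Analysis.Analysis"
begin

definition dfun :: "(real \<Rightarrow> real) \<Rightarrow> real \<Rightarrow> real" where
  "dfun q x = Inf {d. d > 0 \<and> integral {x - d..x + d} q = 2}"

text \<open>Membership in L_p(R) for 1 < p < infinity, and L_infinity(R) := C(R),
  bounded continuous functions. Exponent p is an extended real.\<close>
definition in_Lp :: "ereal \<Rightarrow> (real \<Rightarrow> real) \<Rightarrow> bool" where
  "in_Lp p f = (if p = \<infinity> then continuous_on UNIV f \<and> bounded (range f)
     else f \<in> borel_measurable lebesgue \<and>
          integrable lebesgue (\<lambda>t. \<bar>f t\<bar> powr real_of_ereal p))"

definition Lp_norm :: "ereal \<Rightarrow> (real \<Rightarrow> real) \<Rightarrow> real" where
  "Lp_norm p f = (if p = \<infinity> then (SUP t. \<bar>f t\<bar>)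
     else (LINT t|lebesgue. \<bar>f t\<bar> powr real_of_ereal p) powr (1 / real_of_ereal p))"

text \<open>y is a (Caratheodory) solution of -y' + q y = f on R: y is locally absolutely
  continuous with y' = q y - f almost everywhere, i.e. q y - f is absolutely integrable
  on every compact interval and y b - y a is its integral over [a,b].\<close>
definition is_solution :: "(real \<Rightarrow> real) \<Rightarrow> (real \<Rightarrow> real) \<Rightarrow> (real \<Rightarrow> real) \<Rightarrow> bool" where
  "is_solution q f y = (\<forall>a b. a \<le> b \<longrightarrow>
     (\<lambda>t. q t * y t - f t) absolutely_integrable_on {a..b} \<and>
     integral {a..b} (\<lambda>t. q t * y t - f t) = y b - y a)"

definition Dset :: "ereal \<Rightarrow> (real \<Rightarrow> real) \<Rightarrow> (real \<Rightarrow> real) set" where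
  "Dset p q = {y. in_Lp p y \<and> (\<exists>f. in_Lp p f \<and> Lp_norm p f = 1 \<and> is_solution q f y)}"

definition Gfun :: "ereal \<Rightarrow> (real \<Rightarrow> real) \<Rightarrow> real \<Rightarrow> ereal" where
  "Gfun p q x = (SUP y \<in> Dset p q. ereal \<bar>y x\<bar>)"

definition conj_exp :: "ereal \<Rightarrow> real" where
  "conj_exp p = (if p = \<infinity> then 1 else real_of_ereal p / (real_of_ereal p - 1))"

end

theory Submission
  imports Defs
begin

text \<open>
  Let Q be a primitive of q. Variation of constants gives, for every solution and every
  T >= x, y(x) = e^(Q(x) - Q(T)) y(T) + int_x^T e^(Q(x) - Q(t)) f(t) dt. Since y is in L_p it
  is bounded along some sequence T -> oo, so Holder's inequality bounds |y(x)| by the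
  1/p'-th power of the kernel integral int_x^oo e^(Q(x) - Q(t)) dt. This integral is O(d(x)):
  Q grows at least at the linear rate m/(2a) everywhere, at the rate 1/(alpha d(x)) on
  [x, x + beta] when |x| >= X by the comparability of d, and d is bounded below on [-X, X]
  by continuity.

  Conversely, the hat function of height d(x)/2 on [x, x + d(x)], multiplied by
  e^(Q(t) - Q(x)), which stays between 1 and e^2 there, is the right-hand side of an
  explicit solution whose value at x is at least d(x)^2/8; normalizing its L_p norm gives
  |y(x)| >= d(x)^(1/p') / (4 e^2).
\<close>

section \<open>Locally absolutely continuous primitives\<close>

definition loc_primitive :: "(real \<Rightarrow> real) \<Rightarrow> (real \<Rightarrow> real) \<Rightarrow> bool" where
  "loc_primitive F g \<longleftrightarrow>
     (\<forall>u v. u \<le> v \<longrightarrow> g absolutely_integrable_on {u..v} \<and> integral {u..v} g = F v - F u)"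

lemma is_solution_iff_loc_primitive:
  "is_solution q f y \<longleftrightarrow> loc_primitive y (\<lambda>t. q t * y t - f t)"
  by (simp add: is_solution_def loc_primitive_def)

lemma loc_primitiveD:
  assumes "loc_primitive F g" "u \<le> v"
  shows "g absolutely_integrable_on {u..v}" "integral {u..v} g = F v - F u"
  using assms by (auto simp: loc_primitive_def)

lemma loc_primitive_integrable_on:
  assumes "loc_primitive F g" shows "g integrable_on {u..v}"
proof (cases "u \<le> v")
  case True
  then show ?thesis using loc_primitiveD(1)[OF assms] absolutely_integrable_on_def by blast
qed (simp add: integrable_on_empty)

lemma loc_primitive_cong:
  "loc_primitive F f \<Longrightarrow> (\<And>t. F t = G t) \<Longrightarrow> (\<And>t. f t = g t) \<Longrightarrow> loc_primitive G g"
  by (metis ext)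

definition indef_integral :: "(real \<Rightarrow> real) \<Rightarrow> real \<Rightarrow> real" where
  "indef_integral g t = (if 0 \<le> t then integral {0..t} g else - integral {t..0} g)"

lemma loc_primitive_indef_integral:
  assumes g: "\<And>u v. g absolutely_integrable_on {u..v}"
  shows "loc_primitive (indef_integral g) g"
  unfolding loc_primitive_def
proof (intro allI impI conjI)
  fix u v :: real assume uv: "u \<le> v"
  show "g absolutely_integrable_on {u..v}" by (rule g)
  have gi: "\<And>u v. g integrable_on {u..v}" using g absolutely_integrable_on_def by blast
  consider "0 \<le> u" | "u < 0" "0 \<le> v" | "v < 0" by linarith
  then show "integral {u..v} g = indef_integral g v - indef_integral g u"
  proof cases
    case 1
    then show ?thesis
      using Henstock_Kurzweil_Integration.integral_combine[of 0 u v g] gi uv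
      by (simp add: indef_integral_def)
  next
    case 2
    then show ?thesis
      using Henstock_Kurzweil_Integration.integral_combine[of u 0 v g] gi
      by (simp add: indef_integral_def)
  next
    case 3
    then show ?thesis
      using Henstock_Kurzweil_Integration.integral_combine[of u v 0 g] gi uv
      by (simp add: indef_integral_def)
  qed
qed

lemma loc_primitive_const: "loc_primitive (\<lambda>t. c) (\<lambda>t. 0)"
  by (simp add: loc_primitive_def)

lemma loc_primitive_add:
  assumes F: "loc_primitive F f" and G: "loc_primitive G g"
  shows "loc_primitive (\<lambda>t. F t + G t) (\<lambda>t. f t + g t)"
  unfolding loc_primitive_def
proof (intro allI impI conjI)
  fix u v :: real assume uv: "u \<le> v"
  show "(\<lambda>t. f t + g t) absolutely_integrable_on {u..v}"
    using loc_primitiveD(1)[OF F uv] loc_primitiveD(1)[OF G uv] by (rule set_integral_add(1))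
  show "integral {u..v} (\<lambda>t. f t + g t) = F v + G v - (F u + G u)"
    using integral_add[OF loc_primitive_integrable_on[OF F] loc_primitive_integrable_on[OF G]]
      loc_primitiveD(2)[OF F uv] loc_primitiveD(2)[OF G uv] by simp
qed

lemma loc_primitive_cmult:
  assumes F: "loc_primitive F f"
  shows "loc_primitive (\<lambda>t. c * F t) (\<lambda>t. c * f t)"
  unfolding loc_primitive_def
proof (intro allI impI conjI)
  fix u v :: real assume uv: "u \<le> v"
  show "(\<lambda>t. c * f t) absolutely_integrable_on {u..v}"
    by (rule set_integrable_mult_right) (rule loc_primitiveD(1)[OF F uv])
  show "integral {u..v} (\<lambda>t. c * f t) = c * F v - c * F u"
    using loc_primitiveD(2)[OF F uv] by (simp add: right_diff_distrib)
qed

lemma continuous_on_loc_primitive: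
  assumes F: "loc_primitive F g" shows "continuous_on S F"
proof -
  have "isCont F t" for t
  proof -
    have "continuous_on {t-1..t+1} (\<lambda>s. F (t-1) + integral {t-1..s} g)"
      by (intro continuous_intros indefinite_integral_continuous_1 loc_primitive_integrable_on[OF F])
    then have "continuous_on {t-1..t+1} F"
      by (rule continuous_on_eq) (simp add: loc_primitiveD(2)[OF F])
    then show "isCont F t"
      by (rule continuous_on_interior) (auto simp: interior_atLeastAtMost_real)
  qed
  then show ?thesis by (simp add: continuous_at_imp_continuous_on)
qed

lemma absolutely_integrable_mult_continuous:
  fixes g h :: "real \<Rightarrow> real"
  assumes "g absolutely_integrable_on {u..v}" "continuous_on {u..v} h"
  shows "(\<lambda>t. g t * h t) absolutely_integrable_on {u..v}"
proof -
  have "(\<lambda>t. h t * g t) absolutely_integrable_on {u..v}"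
    by (rule absolutely_integrable_bounded_measurable_product_real[OF
       continuous_imp_measurable_on_sets_lebesgue[OF assms(2)] _
       compact_imp_bounded[OF compact_continuous_image[OF assms(2) compact_Icc]] assms(1)]) auto
  then show ?thesis by (simp add: mult.commute)
qed

lemma telescoping_increment_bound:
  fixes \<Phi> H :: "real \<Rightarrow> real"
  assumes ab: "a \<le> b" and \<delta>: "\<delta> > 0"
    and local: "\<And>s t. a \<le> s \<Longrightarrow> s \<le> t \<Longrightarrow> t \<le> b \<Longrightarrow> t - s < \<delta> \<Longrightarrow>
                  \<bar>\<Phi> t - \<Phi> s\<bar> \<le> \<epsilon> * (H t - H s)"
  shows "\<bar>\<Phi> b - \<Phi> a\<bar> \<le> \<epsilon> * (H b - H a)"
proof -
  obtain n :: nat where n: "real n > (b - a) / \<delta>" using reals_Archimedean2 by blast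
  then have npos: "n > 0" using ab \<delta> by (cases n) (auto simp: divide_less_0_iff)
  define h where "h = (b - a) / n"
  have h: "0 \<le> h" "h < \<delta>" "real n * h = b - a"
    using ab npos n \<delta> by (auto simp: h_def field_simps)
  have "k \<le> n \<Longrightarrow> \<bar>\<Phi> (a + k * h) - \<Phi> a\<bar> \<le> \<epsilon> * (H (a + k * h) - H a)" for k :: nat
  proof (induction k)
    case (Suc k)
    have "real (Suc k) * h \<le> real n * h" using Suc.prems h by (intro mult_right_mono) auto
    then have "\<bar>\<Phi> (a + Suc k * h) - \<Phi> (a + k * h)\<bar> \<le> \<epsilon> * (H (a + Suc k * h) - H (a + k * h))"
      using h by (intro local) (auto simp: algebra_simps)
    with Suc show ?case by (simp add: algebra_simps)
  qed simp
  from this[of n] show ?thesis using h by simp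
qed

lemma eq_if_increments_locally_dominated:
  fixes \<Phi> H :: "real \<Rightarrow> real"
  assumes ab: "a \<le> b"
    and local: "\<And>\<epsilon>. \<epsilon> > 0 \<Longrightarrow> \<exists>\<delta>>0. \<forall>s t. a \<le> s \<longrightarrow> s \<le> t \<longrightarrow> t \<le> b \<longrightarrow> t - s < \<delta> \<longrightarrow>
                  \<bar>\<Phi> t - \<Phi> s\<bar> \<le> \<epsilon> * (H t - H s)"
  shows "\<Phi> b = \<Phi> a"
proof -
  have bound: "\<bar>\<Phi> b - \<Phi> a\<bar> \<le> \<epsilon> * (H b - H a)" if "\<epsilon> > 0" for \<epsilon>
    using local[OF that] telescoping_increment_bound[OF ab] by metis
  have H: "H a \<le> H b" using bound[of 1] by simp
  have "\<bar>\<Phi> b - \<Phi> a\<bar> \<le> 0"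
  proof (rule field_le_epsilon)
    fix e :: real assume e: "e > 0"
    have "\<bar>\<Phi> b - \<Phi> a\<bar> \<le> e / (H b - H a + 1) * (H b - H a)"
      using bound[of "e / (H b - H a + 1)"] e H by simp
    also have "\<dots> \<le> e" using e H by (simp add: field_simps)
    finally show "\<bar>\<Phi> b - \<Phi> a\<bar> \<le> 0 + e" by simp
  qed
  then show ?thesis by simp
qed

lemma MVT_along_continuous:
  fixes \<phi> \<phi>' F :: "real \<Rightarrow> real"
  assumes "s \<le> t" "continuous_on {s..t} F" "\<And>x. (\<phi> has_real_derivative \<phi>' x) (at x)"
  shows "\<exists>w\<in>{s..t}. \<phi> (F t) - \<phi> (F s) = (F t - F s) * \<phi>' (F w)"
proof -
  obtain \<xi> where \<xi>: "min (F s) (F t) \<le> \<xi>" "\<xi> \<le> max (F s) (F t)"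
    and mvt: "\<phi> (F t) - \<phi> (F s) = (F t - F s) * \<phi>' \<xi>"
  proof -
    consider "F s < F t" | "F s = F t" | "F t < F s" by linarith
    then show thesis
    proof cases
      case 1
      then obtain z where "F s < z" "z < F t" "\<phi> (F t) - \<phi> (F s) = (F t - F s) * \<phi>' z"
        using MVT2[OF 1, of \<phi> \<phi>'] assms(3) by blast
      then show thesis using that[of z] by auto
    next
      case 2
      then show thesis using that by auto
    next
      case 3
      then obtain z where "F t < z" "z < F s" "\<phi> (F s) - \<phi> (F t) = (F s - F t) * \<phi>' z"
        using MVT2[OF 3, of \<phi> \<phi>'] assms(3) by blast
      then show thesis using that[of z] by (auto simp: algebra_simps)
    qed
  qed
  obtain w where "w \<in> {s..t}" "F w = \<xi>"
    using IVT'[of F s \<xi> t] IVT2'[of F t \<xi> s] assms(1,2) \<xi> by (cases "F s \<le> F t") auto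
  with mvt show ?thesis by auto
qed

lemma integral_mult_deviation_le:
  fixes g h :: "real \<Rightarrow> real"
  assumes g: "g absolutely_integrable_on {s..t}" and h: "continuous_on {s..t} h"
    and dev: "\<And>r. r \<in> {s..t} \<Longrightarrow> \<bar>c - h r\<bar> \<le> \<epsilon>"
  shows "\<bar>c * integral {s..t} g - integral {s..t} (\<lambda>r. g r * h r)\<bar> \<le> \<epsilon> * integral {s..t} (\<lambda>r. \<bar>g r\<bar>)"
proof -
  have gi: "g integrable_on {s..t}" and gai: "(\<lambda>r. \<bar>g r\<bar>) integrable_on {s..t}"
    using g by (auto simp: absolutely_integrable_on_def)
  have ghi: "(\<lambda>r. g r * h r) integrable_on {s..t}"
    using absolutely_integrable_mult_continuous[OF g h] absolutely_integrable_on_def by blast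
  have "c * integral {s..t} g - integral {s..t} (\<lambda>r. g r * h r) = integral {s..t} (\<lambda>r. g r * (c - h r))"
    using integral_diff[OF integrable_on_mult_left[OF gi] ghi, of c]
    by (simp add: right_diff_distrib mult.commute)
  also have "norm \<dots> \<le> integral {s..t} (\<lambda>r. \<epsilon> * \<bar>g r\<bar>)"
  proof (rule integral_norm_bound_integral)
    show "(\<lambda>r. g r * (c - h r)) integrable_on {s..t}"
      using integrable_diff[OF integrable_on_mult_left[OF gi] ghi, of c]
      by (simp add: right_diff_distrib mult.commute)
    show "(\<lambda>r. \<epsilon> * \<bar>g r\<bar>) integrable_on {s..t}"
      using integrable_on_cmult_left[OF gai, of \<epsilon>] by simp
    show "norm (g r * (c - h r)) \<le> \<epsilon> * \<bar>g r\<bar>" if "r \<in> {s..t}" for r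
      using mult_left_mono[OF dev[OF that], of "\<bar>g r\<bar>"] by (simp add: abs_mult mult.commute)
  qed
  finally show ?thesis by simp
qed

text \<open>On short intervals the mean value theorem and uniform continuity of
  \<open>\<phi>' \<circ> F\<close> bound the increments of \<open>\<phi> \<circ> F - \<integral> g \<cdot> \<phi>' \<circ> F\<close> by \<open>\<epsilon>\<close> times those of \<open>\<integral> \<bar>g\<bar>\<close>,
  so this difference is constant.\<close>
lemma loc_primitive_compose:
  fixes \<phi> \<phi>' :: "real \<Rightarrow> real"
  assumes F: "loc_primitive F g" and \<phi>: "\<And>x. (\<phi> has_real_derivative \<phi>' x) (at x)"
    and \<phi>': "continuous_on UNIV \<phi>'"
  shows "loc_primitive (\<lambda>t. \<phi> (F t)) (\<lambda>t. g t * \<phi>' (F t))"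
  unfolding loc_primitive_def
proof (intro allI impI conjI)
  have \<phi>'F: "continuous_on S (\<lambda>t. \<phi>' (F t))" for S
    by (rule continuous_on_compose2[OF \<phi>' continuous_on_loc_primitive[OF F]]) auto
  have ai: "(\<lambda>t. g t * \<phi>' (F t)) absolutely_integrable_on {u..v}" if "u \<le> v" for u v
    by (rule absolutely_integrable_mult_continuous[OF loc_primitiveD(1)[OF F that] \<phi>'F])
  fix u v :: real assume uv: "u \<le> v"
  show "(\<lambda>t. g t * \<phi>' (F t)) absolutely_integrable_on {u..v}" by (rule ai[OF uv])
  define \<Phi> where "\<Phi> t = \<phi> (F t) - integral {u..t} (\<lambda>r. g r * \<phi>' (F r))" for t
  define H where "H t = integral {u..t} (\<lambda>r. \<bar>g r\<bar>)" for t
  have "\<Phi> v = \<Phi> u"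
  proof (rule eq_if_increments_locally_dominated[OF uv])
    fix \<epsilon> :: real assume \<epsilon>: "\<epsilon> > 0"
    obtain \<delta> where \<delta>: "\<delta> > 0" and close: "\<And>s t. s \<in> {u..v} \<Longrightarrow> t \<in> {u..v} \<Longrightarrow> dist t s < \<delta> \<Longrightarrow>
        dist (\<phi>' (F t)) (\<phi>' (F s)) < \<epsilon>"
      using compact_uniformly_continuous[OF \<phi>'F compact_Icc] \<epsilon>
      unfolding uniformly_continuous_on_def by metis
    have "\<bar>\<Phi> t - \<Phi> s\<bar> \<le> \<epsilon> * (H t - H s)" if st: "u \<le> s" "s \<le> t" "t \<le> v" "t - s < \<delta>" for s t
    proof -
      obtain w where w: "w \<in> {s..t}" and mvt: "\<phi> (F t) - \<phi> (F s) = (F t - F s) * \<phi>' (F w)"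
        using MVT_along_continuous[OF st(2) continuous_on_loc_primitive[OF F] \<phi>] by blast
      have split: "integral {u..t} k = integral {u..s} k + integral {s..t} k"
        if "\<And>u v. k integrable_on {u..v}" for k :: "real \<Rightarrow> real"
        using Henstock_Kurzweil_Integration.integral_combine[OF st(1,2) that] by simp
      have "(\<lambda>r. g r * \<phi>' (F r)) integrable_on {a..b}" "(\<lambda>r. \<bar>g r\<bar>) integrable_on {a..b}" for a b
        using ai loc_primitiveD(1)[OF F]
        by (cases "a \<le> b"; force simp: absolutely_integrable_on_def integrable_on_empty)+
      then have "\<Phi> t - \<Phi> s = \<phi>' (F w) * integral {s..t} g - integral {s..t} (\<lambda>r. g r * \<phi>' (F r))"
        and "H t - H s = integral {s..t} (\<lambda>r. \<bar>g r\<bar>)"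
        using split mvt loc_primitiveD(2)[OF F st(2)] by (auto simp: \<Phi>_def H_def mult.commute)
      moreover have "\<bar>\<phi>' (F w) - \<phi>' (F r)\<bar> \<le> \<epsilon>" if "r \<in> {s..t}" for r
      proof -
        have "dist w r < \<delta>" using that w st by (auto simp: dist_real_def)
        then show ?thesis using close[of r w] that w st by (auto simp: dist_real_def)
      qed
      ultimately show ?thesis
        using integral_mult_deviation_le[OF loc_primitiveD(1)[OF F st(2)] \<phi>'F] by simp
    qed
    with \<delta> show "\<exists>\<delta>>0. \<forall>s t. u \<le> s \<longrightarrow> s \<le> t \<longrightarrow> t \<le> v \<longrightarrow> t - s < \<delta> \<longrightarrow>
        \<bar>\<Phi> t - \<Phi> s\<bar> \<le> \<epsilon> * (H t - H s)" by blast
  qed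
  then show "integral {u..v} (\<lambda>t. g t * \<phi>' (F t)) = \<phi> (F v) - \<phi> (F u)"
    by (simp add: \<Phi>_def)
qed

lemma loc_primitive_exp:
  assumes "loc_primitive F g"
  shows "loc_primitive (\<lambda>t. exp (F t)) (\<lambda>t. g t * exp (F t))"
  by (rule loc_primitive_compose[OF assms DERIV_exp continuous_on_exp[OF continuous_on_id]])

text \<open>Product rule, by polarization: \<open>F G = ((F + G)\<^sup>2 - (F - G)\<^sup>2) / 4\<close>.\<close>
lemma loc_primitive_mult:
  assumes F: "loc_primitive F f" and G: "loc_primitive G g"
  shows "loc_primitive (\<lambda>t. F t * G t) (\<lambda>t. f t * G t + F t * g t)"
proof -
  have sq: "loc_primitive (\<lambda>t. (H t)\<^sup>2) (\<lambda>t. h t * (2 * H t))" if "loc_primitive H h" for H h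
    by (rule loc_primitive_compose[OF that]) (auto intro!: derivative_eq_intros continuous_intros)
  have "loc_primitive (\<lambda>t. (1/4) * ((F t + G t)\<^sup>2 + (-1) * (F t + (-1) * G t)\<^sup>2))
      (\<lambda>t. (1/4) * ((f t + g t) * (2 * (F t + G t))
                      + (-1) * ((f t + (-1) * g t) * (2 * (F t + (-1) * G t)))))"
    by (intro loc_primitive_cmult loc_primitive_add sq F G)
  then show ?thesis by (rule loc_primitive_cong) (simp_all add: algebra_simps power2_eq_square)
qed

section \<open>Lebesgue integrals on the line and \<open>L\<^sub>p\<close>\<close>

lemma borel_measurable_lebesgue_continuous:
  fixes h :: "real \<Rightarrow> real"
  shows "continuous_on UNIV h \<Longrightarrow> h \<in> borel_measurable lebesgue"
  using continuous_imp_measurable_on_sets_lebesgue[of UNIV h] by (simp add: lebesgue_on_UNIV_eq)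

lemma integrable_lebesgue_if_continuous_vanishing_outside:
  fixes h :: "real \<Rightarrow> real"
  assumes h: "continuous_on {u..v} h" and out: "\<And>t. t \<notin> {u..v} \<Longrightarrow> h t = 0"
  shows "integrable lebesgue h" "(LINT t|lebesgue. h t) = integral {u..v} h"
proof -
  have eq: "(\<lambda>t. if t \<in> {u..v} then h t else 0) = h" using out by auto
  have "h absolutely_integrable_on {u..v}" by (rule absolutely_integrable_continuous_real[OF h])
  then have "h absolutely_integrable_on UNIV"
    using absolutely_integrable_restrict_UNIV[of "{u..v}" h] eq by simp
  then show hi: "integrable lebesgue h" by (simp add: set_integrable_def)
  have "(LINT t|lebesgue. h t) = integral UNIV h" by (rule integral_lebesgue[OF hi, symmetric])
  also have "\<dots> = integral {u..v} h" using integral_restrict_UNIV[of "{u..v}" h] eq by simp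
  finally show "(LINT t|lebesgue. h t) = integral {u..v} h" .
qed

lemma integrable_exp_left_tail:
  fixes c x :: real
  assumes c: "c > 0"
  shows "integrable lebesgue (\<lambda>t. indicator {..x} t * exp (c * (t - x)))"
proof -
  define h where "h t = indicator {0..} t * exp (- c * t)" for t :: real
  have "(\<lambda>t. exp (- c * t)) absolutely_integrable_on {0..}"
    using integrable_on_exp_minus_to_infinity[OF c] by (rule nonnegative_absolutely_integrable_1) simp
  then have "(\<lambda>t. if t \<in> {0..} then exp (- c * t) else 0) absolutely_integrable_on UNIV"
    by (rule iffD2[OF absolutely_integrable_restrict_UNIV])
  moreover have "(\<lambda>t. if t \<in> {0..} then exp (- c * t) else 0) = h"
    by (auto simp: h_def)
  ultimately have "integrable lebesgue h" by (simp add: set_integrable_def)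
  moreover have "h \<in> borel_measurable lborel" unfolding h_def by measurable
  ultimately have "integrable lborel (\<lambda>t. h (x + (-1) * t))"
    by (intro lborel_integrable_real_affine) (auto simp: integrable_completion)
  moreover have "h (x + (-1) * t) = indicator {..x} t * exp (c * (t - x))" for t
    by (simp add: h_def indicator_def algebra_simps)
  moreover have "(\<lambda>t. indicator {..x} t * exp (c * (t - x))) \<in> borel_measurable lborel"
    by measurable
  ultimately show ?thesis by (simp add: integrable_completion)
qed

lemma
  fixes h :: "real \<Rightarrow> real"
  assumes h: "integrable lebesgue h"
  shows integrable_on_Icc_if_integrable_lebesgue: "h integrable_on {u..v}"
    and integral_Icc_le_lebesgue_integral:
      "(\<And>t. h t \<ge> 0) \<Longrightarrow> integral {u..v} h \<le> (LINT t|lebesgue. h t)"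
proof -
  have ai: "h absolutely_integrable_on UNIV" using h by (simp add: set_integrable_def)
  then show hi: "h integrable_on {u..v}"
    using absolutely_integrable_on_subinterval absolutely_integrable_on_def by blast
  assume "\<And>t. h t \<ge> 0"
  then have "integral {u..v} h \<le> integral UNIV h"
    using hi ai absolutely_integrable_on_def by (intro integral_subset_le) auto
  then show "integral {u..v} h \<le> (LINT t|lebesgue. h t)" by (simp add: integral_lebesgue[OF h])
qed

lemma in_Lp_frequently_bounded:
  assumes p: "p > 1" and y: "in_Lp p y"
  obtains M where "M > 0" "\<And>T0. \<exists>T\<ge>T0. \<bar>y T\<bar> \<le> M"
proof (cases p)
  case PInf
  then obtain M where "\<And>t. \<bar>y t\<bar> \<le> M" using y by (auto simp: in_Lp_def bounded_iff)
  then have "\<exists>T\<ge>T0. \<bar>y T\<bar> \<le> max M 1" for T0 by (metis order_refl le_max_iff_disj)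
  then show ?thesis by (intro that[of "max M 1"]) auto
next
  case (real r)
  with p y have r: "r > 0" and yi: "integrable lebesgue (\<lambda>t. \<bar>y t\<bar> powr r)"
    by (auto simp: in_Lp_def)
  have "\<exists>T\<ge>T0. \<bar>y T\<bar> \<le> 1" for T0
  proof (rule ccontr)
    assume "\<not> ?thesis"
    then have big: "\<And>T. T \<ge> T0 \<Longrightarrow> 1 \<le> \<bar>y T\<bar> powr r" using r by (auto simp: ge_one_powr_ge_zero)
    obtain n :: nat where n: "real n > (LINT t|lebesgue. \<bar>y t\<bar> powr r)"
      using reals_Archimedean2 by blast
    have "real n = integral {T0..T0 + real n} (\<lambda>t. 1)" by simp
    also have "\<dots> \<le> integral {T0..T0 + real n} (\<lambda>t. \<bar>y t\<bar> powr r)"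
      using big integrable_on_Icc_if_integrable_lebesgue[OF yi] by (intro integral_le) auto
    also have "\<dots> \<le> (LINT t|lebesgue. \<bar>y t\<bar> powr r)"
      by (rule integral_Icc_le_lebesgue_integral[OF yi]) simp
    finally show False using n by simp
  qed
  then show ?thesis by (intro that[of 1]) auto
qed (use p in simp)

lemma bdd_above_abs_if_in_Lp_infinity:
  "in_Lp \<infinity> f \<Longrightarrow> bdd_above (range (\<lambda>t. \<bar>f t\<bar>))"
  by (auto simp: in_Lp_def bounded_iff bdd_above_def)

lemma abs_le_Lp_norm_infinity:
  "in_Lp \<infinity> f \<Longrightarrow> \<bar>f t\<bar> \<le> Lp_norm \<infinity> f"
  using cSUP_upper[of t UNIV "\<lambda>t. \<bar>f t\<bar>"] bdd_above_abs_if_in_Lp_infinity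
  by (simp add: Lp_norm_def)

lemma
  fixes f :: "real \<Rightarrow> real"
  assumes p: "p > 1" and c: "c > 0" and f: "in_Lp p f"
  shows in_Lp_cmult: "in_Lp p (\<lambda>t. c * f t)"
    and Lp_norm_cmult: "Lp_norm p (\<lambda>t. c * f t) = c * Lp_norm p f"
proof -
  have abs_powr: "\<bar>c * f t\<bar> powr r = c powr r * \<bar>f t\<bar> powr r" for t r
    using c by (simp add: abs_mult powr_mult)
  show "in_Lp p (\<lambda>t. c * f t)"
  proof (cases "p = \<infinity>")
    case True
    then obtain M where "continuous_on UNIV f" "\<And>t. \<bar>f t\<bar> \<le> M"
      using f by (auto simp: in_Lp_def bounded_iff)
    moreover from this have "\<bar>c * f t\<bar> \<le> c * M" for t
      using c by (simp add: abs_mult mult_left_mono)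
    ultimately show ?thesis
      using True by (auto simp: in_Lp_def bounded_iff intro!: continuous_intros)
  next
    case False
    then show ?thesis
      using f borel_measurable_times[OF borel_measurable_const, of f lebesgue c]
      by (simp add: in_Lp_def abs_powr)
  qed
  show "Lp_norm p (\<lambda>t. c * f t) = c * Lp_norm p f"
  proof (cases p)
    case PInf
    have "bdd_above (range (\<lambda>t. \<bar>f t\<bar>))"
      using f PInf by (simp add: bdd_above_abs_if_in_Lp_infinity)
    then have "c * (SUP t. \<bar>f t\<bar>) = (SUP u \<in> range (\<lambda>t. \<bar>f t\<bar>). c * u)"
      using c by (intro continuous_at_Sup_mono) (auto intro!: monoI mult_left_mono continuous_intros)
    then show ?thesis using PInf c by (simp add: Lp_norm_def abs_mult image_image)
  next
    case (real r)
    have "(LINT t|lebesgue. \<bar>f t\<bar> powr r) \<ge> 0" by simp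
    then show ?thesis
      using real p c by (simp add: Lp_norm_def abs_powr powr_mult powr_powr)
  qed (use p in simp)
qed

text \<open>Holder's inequality with \<open>\<parallel>g\<parallel>\<^sub>s \<le> 1\<close>: Young's inequality applied to
  \<open>v / K\<^sup>1\<^sup>/\<^sup>r\<close> and \<open>g\<close>, then integrated.\<close>
lemma integral_mult_le_Young:
  fixes v g :: "real \<Rightarrow> real"
  assumes rs: "r > 1" "s > 1" "1 / r + 1 / s = 1"
    and nonneg: "\<And>t. t \<in> S \<Longrightarrow> 0 \<le> v t \<and> 0 \<le> g t"
    and vg: "(\<lambda>t. v t * g t) integrable_on S"
    and v: "(\<lambda>t. v t powr r) integrable_on S" "integral S (\<lambda>t. v t powr r) \<le> K" "K > 0"
    and g: "(\<lambda>t. g t powr s) integrable_on S" "integral S (\<lambda>t. g t powr s) \<le> 1"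
  shows "integral S (\<lambda>t. v t * g t) \<le> K powr (1 / r)"
proof -
  define A where "A = K powr (1 / r)"
  have A: "A > 0" "A powr r = K" using v(3) rs by (auto simp: A_def powr_powr)
  have young: "v t * g t \<le> A / K / r * v t powr r + A / s * g t powr s" if "t \<in> S" for t
  proof -
    have "v t / A * g t \<le> (v t / A) powr r / r + g t powr s / s"
      using nonneg[OF that] A by (intro Youngs_inequality rs) auto
    also have "(v t / A) powr r = v t powr r / K"
      using nonneg[OF that] A by (simp add: powr_divide)
    finally show ?thesis using A v(3) by (simp add: field_simps)
  qed
  have "integral S (\<lambda>t. v t * g t) \<le> integral S (\<lambda>t. A / K / r * v t powr r + A / s * g t powr s)"
    using young v(1) g(1) by (intro integral_le vg integrable_add integrable_on_mult_right) auto
  also have "\<dots> = A / K / r * integral S (\<lambda>t. v t powr r) + A / s * integral S (\<lambda>t. g t powr s)"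
    using v(1) g(1) by (simp add: integral_add integrable_on_mult_right
        Henstock_Kurzweil_Integration.integral_mult_right del: times_divide_eq_left)
  also have "\<dots> \<le> A / K / r * K + A / s * 1"
    using v g A rs by (intro add_mono mult_left_mono) auto
  also have "\<dots> = A * (1 / r + 1 / s)" using v(3) by (simp add: field_simps)
  finally show ?thesis using rs(3) by (simp add: A_def)
qed

lemma integral_powr_eq_1_if_Lp_norm_eq_1:
  assumes "Lp_norm (ereal r) f = 1" "r > 0"
  shows "(LINT t|lebesgue. \<bar>f t\<bar> powr r) = 1"
proof -
  have "((LINT t|lebesgue. \<bar>f t\<bar> powr r) powr (1 / r)) powr r = 1"
    using assms by (simp add: Lp_norm_def)
  moreover have "(LINT t|lebesgue. \<bar>f t\<bar> powr r) \<ge> 0" by simp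
  ultimately show ?thesis using assms(2) by (simp add: powr_powr)
qed

text \<open>Since \<open>w\<^sup>p\<^sup>' \<le> w\<close>, only \<open>\<integral> w\<close> enters the Holder bound.\<close>
lemma weighted_integral_le_Lp_norm:
  fixes w f :: "real \<Rightarrow> real"
  assumes p: "p > 1" and fLp: "in_Lp p f" "Lp_norm p f = 1"
    and f: "f absolutely_integrable_on {x..T}"
    and w: "continuous_on {x..T} w" "\<And>t. t \<in> {x..T} \<Longrightarrow> 0 \<le> w t \<and> w t \<le> 1"
    and K: "integral {x..T} w \<le> K" "K > 0"
  shows "integral {x..T} (\<lambda>t. w t * \<bar>f t\<bar>) \<le> K powr (1 / conj_exp p)"
proof -
  have wfi: "(\<lambda>t. w t * \<bar>f t\<bar>) integrable_on {x..T}"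
    using absolutely_integrable_mult_continuous[OF absolutely_integrable_abs[OF f] w(1)]
    by (simp add: absolutely_integrable_on_def mult.commute)
  have wi: "w integrable_on {x..T}" by (rule integrable_continuous_real[OF w(1)])
  show ?thesis
  proof (cases p)
    case PInf
    have "integral {x..T} (\<lambda>t. w t * \<bar>f t\<bar>) \<le> integral {x..T} w"
      using w(2) abs_le_Lp_norm_infinity[of f] fLp PInf
      by (intro integral_le[OF wfi wi]) (simp add: mult_left_le)
    then show ?thesis using K PInf by (simp add: conj_exp_def)
  next
    case (real pr)
    define r where "r = pr / (pr - 1)"
    have pr: "pr > 1" and r: "r > 1" "1 / r + 1 / pr = 1"
      using real p by (auto simp: r_def field_simps)
    have fpi: "integrable lebesgue (\<lambda>t. \<bar>f t\<bar> powr pr)" using fLp(1) real by (simp add: in_Lp_def)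
    have wr: "(\<lambda>t. w t powr r) integrable_on {x..T}"
      using w r(1) by (intro integrable_continuous_real continuous_on_powr') auto
    have "w t powr r \<le> w t" if "t \<in> {x..T}" for t
    proof (cases "w t = 0")
      case False
      then have "w t powr r \<le> w t powr 1" using w(2)[OF that] r(1) by (intro powr_mono') auto
      then show ?thesis using w(2)[OF that] by simp
    qed simp
    then have "integral {x..T} (\<lambda>t. w t powr r) \<le> K"
      using K by (intro order_trans[OF integral_le[OF wr wi]]) auto
    moreover have "integral {x..T} (\<lambda>t. \<bar>f t\<bar> powr pr) \<le> 1"
      using integral_Icc_le_lebesgue_integral[OF fpi] integral_powr_eq_1_if_Lp_norm_eq_1[of pr f]
        fLp(2) real pr by simp
    ultimately have "integral {x..T} (\<lambda>t. w t * \<bar>f t\<bar>) \<le> K powr (1 / r)"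
      using w(2) wr K integrable_on_Icc_if_integrable_lebesgue[OF fpi]
      by (intro integral_mult_le_Young[OF r(1) pr r(2) _ wfi]) auto
    then show ?thesis using real pr by (simp add: conj_exp_def r_def)
  qed (use p in simp)
qed

section \<open>The primitive of \<open>q\<close> and the scale \<open>d\<close>\<close>

locale uniformly_positive_potential =
  fixes q :: "real \<Rightarrow> real" and a :: real
  assumes q_nonneg: "\<And>t. q t \<ge> 0"
    and q_loc: "\<And>u v. q absolutely_integrable_on {u..v}"
    and a_pos: "a > 0"
    and inf_pos: "(INF x. integral {x - a..x + a} q) > 0"
begin

definition m :: real where "m = (INF x. integral {x - a..x + a} q)"

definition \<kappa> :: real where "\<kappa> = m / (2 * a)"

definition Q :: "real \<Rightarrow> real" where "Q = indef_integral q"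

lemma m_pos: "m > 0"
  using inf_pos by (simp add: m_def)

lemma kappa_pos: "\<kappa> > 0"
  using m_pos a_pos by (simp add: \<kappa>_def)

lemma loc_primitive_Q: "loc_primitive Q q"
  unfolding Q_def by (rule loc_primitive_indef_integral[OF q_loc])

lemma integral_q_eq: "u \<le> v \<Longrightarrow> integral {u..v} q = Q v - Q u"
  by (rule loc_primitiveD(2)[OF loc_primitive_Q])

lemma Q_mono:
  assumes "u \<le> v" shows "Q u \<le> Q v"
  using integral_q_eq[OF assms]
    integral_nonneg[OF loc_primitive_integrable_on[OF loc_primitive_Q] q_nonneg, of u v]
  by simp

lemma continuous_on_Q: "continuous_on S Q"
  by (rule continuous_on_loc_primitive[OF loc_primitive_Q])

lemma m_le_window: "m \<le> Q (x + a) - Q (x - a)"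
proof -
  have "bdd_below (range (\<lambda>x. integral {x - a..x + a} q))"
    using loc_primitive_integrable_on[OF loc_primitive_Q]
    by (intro bdd_belowI[of _ 0]) (auto intro!: integral_nonneg q_nonneg)
  then have "m \<le> integral {x - a..x + a} q" unfolding m_def by (rule cINF_lower) simp
  then show ?thesis using integral_q_eq[of "x - a" "x + a"] a_pos by simp
qed

lemma Q_increment_ge_windows:
  assumes L: "L > 0" and \<theta>: "\<theta> \<ge> 0"
    and window: "\<And>u. s \<le> u \<Longrightarrow> u + L \<le> R \<Longrightarrow> \<theta> \<le> Q (u + L) - Q u"
    and st: "s \<le> t" "t \<le> R"
  shows "\<theta> * ((t - s) / L - 1) \<le> Q t - Q s"
proof -
  define k where "k = nat \<lfloor>(t - s) / L\<rfloor>"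
  have "real k = of_int \<lfloor>(t - s) / L\<rfloor>" using st L by (simp add: k_def)
  then have k: "real k * L \<le> t - s" "(t - s) / L - 1 < real k"
    using L by (simp_all add: pos_le_divide_eq[symmetric])
  have "j \<le> k \<Longrightarrow> real j * \<theta> \<le> Q (s + real j * L) - Q s" for j
  proof (induction j)
    case (Suc j)
    have "real (Suc j) * L \<le> real k * L" using Suc.prems L by (simp add: mult_right_mono)
    then have "s + real j * L + L \<le> R" using k st by (simp add: algebra_simps)
    then have "\<theta> \<le> Q (s + real j * L + L) - Q (s + real j * L)"
      using L by (intro window) auto
    with Suc show ?case by (simp add: algebra_simps)
  qed simp
  from this[of k] have "real k * \<theta> \<le> Q (s + real k * L) - Q s" by simp
  moreover have "Q (s + real k * L) \<le> Q t" using k by (intro Q_mono) simp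
  moreover have "\<theta> * ((t - s) / L - 1) \<le> real k * \<theta>"
    using mult_left_mono[OF less_imp_le[OF k(2)] \<theta>] by (simp add: mult.commute)
  ultimately show ?thesis by linarith
qed

lemma Q_increment_ge:
  assumes "s \<le> t" shows "\<kappa> * (t - s) - m \<le> Q t - Q s"
proof -
  have "m * ((t - s) / (2 * a) - 1) \<le> Q t - Q s"
  proof (rule Q_increment_ge_windows[OF _ _ _ assms order_refl])
    show "m \<le> Q (u + 2 * a) - Q u" for u
      using m_le_window[of "u + a"] by (simp add: algebra_simps)
  qed (use a_pos m_pos in auto)
  moreover have "m * ((t - s) / (2 * a) - 1) = \<kappa> * (t - s) - m"
    using a_pos by (simp add: \<kappa>_def field_simps)
  ultimately show ?thesis by simp
qed

lemma dfun_eq_Inf: "dfun q x = Inf {d. 0 \<le> d \<and> Q (x + d) - Q (x - d) = 2}"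
proof -
  have "(d > 0 \<and> integral {x - d..x + d} q = 2) \<longleftrightarrow> (0 \<le> d \<and> Q (x + d) - Q (x - d) = 2)" for d
    using integral_q_eq[of "x - d" "x + d"] by (cases "d = 0") auto
  then show ?thesis by (simp add: dfun_def)
qed

lemma symmetric_increment_eq_2:
  assumes "0 \<le> s" "2 \<le> Q (x + s) - Q (x - s)"
  shows "\<exists>d\<in>{0..s}. Q (x + d) - Q (x - d) = 2"
proof -
  have "continuous_on {0..s} (\<lambda>d. Q (x + d) - Q (x - d))"
    by (intro continuous_intros continuous_on_compose2[OF continuous_on_Q]) auto
  then show ?thesis
    using IVT'[of "\<lambda>d. Q (x + d) - Q (x - d)" 0 2 s] assms by auto
qed

lemma
  shows dfun_nonneg: "0 \<le> dfun q x"
    and Q_dfun: "Q (x + dfun q x) - Q (x - dfun q x) = 2"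
    and dfun_le: "\<And>s. 0 \<le> s \<Longrightarrow> 2 \<le> Q (x + s) - Q (x - s) \<Longrightarrow> dfun q x \<le> s"
proof -
  let ?S = "{d. 0 \<le> d \<and> Q (x + d) - Q (x - d) = 2}"
  define s where "s = a * (1 + 2 / m)"
  have s: "0 \<le> s" using a_pos m_pos by (simp add: s_def)
  have "\<kappa> * ((x + s) - (x - s)) - m = 2"
    using a_pos m_pos by (simp add: s_def \<kappa>_def field_simps)
  then have "2 \<le> Q (x + s) - Q (x - s)" using Q_increment_ge[of "x - s" "x + s"] s by simp
  then have ne: "?S \<noteq> {}" using symmetric_increment_eq_2[where x=x, OF s] by fastforce
  have bdd: "bdd_below ?S" by (rule bdd_belowI[of _ 0]) auto
  have "continuous_on UNIV (\<lambda>d. Q (x + d) - Q (x - d))"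
    by (intro continuous_intros continuous_on_compose2[OF continuous_on_Q]) auto
  then have "closed ?S"
    by (intro closed_Collect_conj closed_Collect_le closed_Collect_eq continuous_on_const
        continuous_on_id)
  then have "dfun q x \<in> ?S" unfolding dfun_eq_Inf by (rule closed_contains_Inf[OF ne bdd])
  then show "0 \<le> dfun q x" "Q (x + dfun q x) - Q (x - dfun q x) = 2" by auto
  fix s assume "0 \<le> s" "2 \<le> Q (x + s) - Q (x - s)"
  then obtain d where "d \<le> s" "d \<in> ?S" using symmetric_increment_eq_2 by fastforce
  then show "dfun q x \<le> s" unfolding dfun_eq_Inf using cInf_lower[OF _ bdd] by fastforce
qed

lemma dfun_pos: "dfun q x > 0"
  using dfun_nonneg[of x] Q_dfun[of x] by (cases "dfun q x = 0") auto

lemma dfun_lipschitz: "dfun q t \<le> dfun q x + \<bar>t - x\<bar>"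
proof (rule dfun_le)
  show "0 \<le> dfun q x + \<bar>t - x\<bar>" using dfun_pos[of x] by simp
  have "Q (x + dfun q x) \<le> Q (t + (dfun q x + \<bar>t - x\<bar>))"
    and "Q (t - (dfun q x + \<bar>t - x\<bar>)) \<le> Q (x - dfun q x)" by (simp_all add: Q_mono)
  then show "2 \<le> Q (t + (dfun q x + \<bar>t - x\<bar>)) - Q (t - (dfun q x + \<bar>t - x\<bar>))"
    using Q_dfun[of x] by simp
qed

lemma continuous_on_dfun: "continuous_on S (dfun q)"
proof -
  have "continuous_on UNIV (dfun q)"
    unfolding continuous_on_iff
  proof (intro ballI allI impI)
    fix x e :: real assume "e > 0"
    moreover have "dist (dfun q t) (dfun q x) < e" if "dist t x < e" for t
      using that dfun_lipschitz[of t x] dfun_lipschitz[of x t]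
      by (simp add: dist_real_def abs_minus_commute)
    ultimately show "\<exists>d>0. \<forall>t\<in>UNIV. dist t x < d \<longrightarrow> dist (dfun q t) (dfun q x) < e" by blast
  qed
  then show ?thesis by (rule continuous_on_subset) simp
qed

lemma dfun_bounded_below_on_compact:
  obtains \<delta> where "\<delta> > 0" "\<And>x. \<bar>x\<bar> \<le> X \<Longrightarrow> \<delta> \<le> dfun q x"
proof (cases "X < 0")
  case True
  then show ?thesis by (intro that[of 1]) auto
next
  case False
  then have "{-X..X} \<noteq> {}" by simp
  from continuous_attains_inf[OF compact_Icc this continuous_on_dfun]
  obtain x0 where "\<And>x. x \<in> {-X..X} \<Longrightarrow> dfun q x0 \<le> dfun q x" by blast
  then show ?thesis using dfun_pos[of x0] by (intro that[of "dfun q x0"]) (auto simp: abs_le_iff)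
qed

end

section \<open>The upper bound\<close>

lemma integral_exp_decay_le:
  fixes c x T :: real
  assumes c: "c > 0" and xT: "x \<le> T"
  shows "(\<lambda>t. exp (- c * (t - x))) integrable_on {x..T}"
    and "integral {x..T} (\<lambda>t. exp (- c * (t - x))) \<le> 1 / c"
proof -
  have "((\<lambda>t. exp (- c * (t - x))) has_integral
      (- exp (- c * (T - x)) / c - (- exp (- c * (x - x)) / c))) {x..T}"
    using xT c
    by (intro fundamental_theorem_of_calculus)
       (auto intro!: derivative_eq_intros simp flip: has_real_derivative_iff_has_vector_derivative)
  then have int: "((\<lambda>t. exp (- c * (t - x))) has_integral (1 - exp (- c * (T - x))) / c) {x..T}"
    by (simp add: diff_divide_distrib)
  then show "(\<lambda>t. exp (- c * (t - x))) integrable_on {x..T}" by blast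
  show "integral {x..T} (\<lambda>t. exp (- c * (t - x))) \<le> 1 / c"
    using integral_unique[OF int] c by (simp add: divide_right_mono)
qed

context uniformly_positive_potential
begin

definition decay :: "real \<Rightarrow> real \<Rightarrow> real" where
  "decay x t = exp (Q x - Q t)"

lemma decay_pos: "decay x t > 0"
  by (simp add: decay_def)

lemma decay_le_1: "x \<le> t \<Longrightarrow> decay x t \<le> 1"
  by (simp add: decay_def Q_mono)

lemma continuous_on_decay: "continuous_on S (decay x)"
  unfolding decay_def by (intro continuous_intros continuous_on_Q)

lemma loc_primitive_decay: "loc_primitive (decay x) (\<lambda>t. - q t * decay x t)"
proof -
  have "loc_primitive (\<lambda>t. Q x + (-1) * Q t) (\<lambda>t. 0 + (-1) * q t)"
    by (intro loc_primitive_add loc_primitive_const loc_primitive_cmult loc_primitive_Q)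
  from loc_primitive_exp[OF this] show ?thesis
    by (rule loc_primitive_cong) (simp_all add: decay_def)
qed

lemma decay_le_exp: "x \<le> t \<Longrightarrow> decay x t \<le> exp m * exp (- \<kappa> * (t - x))"
  using Q_increment_ge[of x t] by (simp add: decay_def flip: exp_add)

lemma decay_tendsto_0: "(decay x \<longlongrightarrow> 0) at_top"
proof (rule tendsto_sandwich)
  show "\<forall>\<^sub>F t in at_top. 0 \<le> decay x t" using decay_pos by (simp add: less_imp_le)
  show "\<forall>\<^sub>F t in at_top. decay x t \<le> exp m * exp (- \<kappa> * (t - x))"
    using eventually_ge_at_top[of x] by eventually_elim (rule decay_le_exp)
  have "filterlim (\<lambda>t. \<kappa> * (t - x)) at_top at_top"
    unfolding filterlim_at_top
  proof
    fix Z
    show "\<forall>\<^sub>F t in at_top. Z \<le> \<kappa> * (t - x)"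
      using eventually_ge_at_top[of "x + Z / \<kappa>"]
      by eventually_elim (use kappa_pos in \<open>simp add: field_simps\<close>)
  qed
  then have "filterlim (\<lambda>t. - (\<kappa> * (t - x))) at_bot at_top"
    by (simp add: filterlim_uminus_at_bot)
  from filterlim_compose[OF exp_at_bot this]
  show "((\<lambda>t. exp m * exp (- \<kappa> * (t - x))) \<longlongrightarrow> 0) at_top"
    by (simp add: tendsto_mult_right_zero)
qed simp

lemma integral_decay_le:
  assumes xT: "x \<le> T" shows "integral {x..T} (decay x) \<le> exp m / \<kappa>"
proof -
  have "integral {x..T} (decay x) \<le> integral {x..T} (\<lambda>t. exp m * exp (- \<kappa> * (t - x)))"
    using integral_exp_decay_le(1)[OF kappa_pos xT] decay_le_exp
    by (intro integral_le integrable_continuous_real continuous_on_decay)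
       (auto intro!: continuous_intros)
  also have "\<dots> \<le> exp m * (1 / \<kappa>)"
    using mult_left_mono[OF integral_exp_decay_le(2)[OF kappa_pos xT], of "exp m"] by simp
  finally show ?thesis by simp
qed

lemma is_solution_forcing_integrable:
  assumes sol: "is_solution q f y" and uv: "u \<le> v"
  shows "f absolutely_integrable_on {u..v}"
proof -
  have y: "loc_primitive y (\<lambda>t. q t * y t - f t)"
    using sol by (simp add: is_solution_iff_loc_primitive)
  have "(\<lambda>t. q t * y t - (q t * y t - f t)) absolutely_integrable_on {u..v}"
    by (intro set_integral_diff(1) absolutely_integrable_mult_continuous q_loc
        continuous_on_loc_primitive[OF y] loc_primitiveD(1)[OF y uv])
  then show ?thesis by simp
qed

text \<open>Variation of constants: \<open>(decay x \<cdot> y)' = - decay x \<cdot> f\<close>.\<close>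
lemma solution_representation:
  assumes sol: "is_solution q f y" and xT: "x \<le> T"
  shows "y x = decay x T * y T + integral {x..T} (\<lambda>t. decay x t * f t)"
proof -
  have "loc_primitive (\<lambda>t. decay x t * y t) (\<lambda>t. - q t * decay x t * y t + decay x t * (q t * y t - f t))"
    using loc_primitive_mult[OF loc_primitive_decay] sol by (simp add: is_solution_iff_loc_primitive)
  then have "loc_primitive (\<lambda>t. decay x t * y t) (\<lambda>t. - (decay x t * f t))"
    by (rule loc_primitive_cong) (simp_all add: algebra_simps)
  from loc_primitiveD(2)[OF this xT] show ?thesis by (simp add: decay_def)
qed

lemma integral_decay_forcing_le:
  assumes p: "p > 1" and sol: "is_solution q f y" and fLp: "in_Lp p f" "Lp_norm p f = 1"
    and xT: "x \<le> T" and K: "K > 0" "integral {x..T} (decay x) \<le> K"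
  shows "\<bar>integral {x..T} (\<lambda>t. decay x t * f t)\<bar> \<le> K powr (1 / conj_exp p)"
proof -
  have f: "f absolutely_integrable_on {x..T}" by (rule is_solution_forcing_integrable[OF sol xT])
  have "(\<lambda>t. f t * decay x t) absolutely_integrable_on {x..T}"
    "(\<lambda>t. \<bar>f t\<bar> * decay x t) absolutely_integrable_on {x..T}"
    using f absolutely_integrable_abs[OF f]
    by (auto intro!: absolutely_integrable_mult_continuous continuous_on_decay)
  then have "norm (integral {x..T} (\<lambda>t. decay x t * f t)) \<le> integral {x..T} (\<lambda>t. decay x t * \<bar>f t\<bar>)"
    by (intro integral_norm_bound_integral)
       (auto simp: absolutely_integrable_on_def mult.commute abs_mult decay_pos less_imp_le)
  also have "\<dots> \<le> K powr (1 / conj_exp p)"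
    using decay_pos decay_le_1 K
    by (intro weighted_integral_le_Lp_norm[OF p fLp f continuous_on_decay]) (auto simp: less_imp_le)
  finally show ?thesis by simp
qed

lemma solution_abs_le:
  assumes p: "p > 1" and y: "y \<in> Dset p q"
    and K: "K > 0" "\<And>T. x \<le> T \<Longrightarrow> integral {x..T} (decay x) \<le> K"
  shows "\<bar>y x\<bar> \<le> K powr (1 / conj_exp p)"
proof -
  obtain f where yLp: "in_Lp p y" and fLp: "in_Lp p f" "Lp_norm p f = 1"
    and sol: "is_solution q f y"
    using y by (auto simp: Dset_def)
  obtain M where M: "M > 0" "\<And>T0. \<exists>T\<ge>T0. \<bar>y T\<bar> \<le> M"
    using in_Lp_frequently_bounded[OF p yLp] by blast
  note forcing = integral_decay_forcing_le[OF p sol fLp _ K(1) K(2)]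
  show ?thesis
  proof (rule field_le_epsilon)
    fix e :: real assume e: "e > 0"
    have "\<forall>\<^sub>F T in at_top. decay x T < e / M \<and> x \<le> T"
      using order_tendstoD(2)[OF decay_tendsto_0, of "e / M"] e M(1) eventually_ge_at_top[of x]
      by (auto intro: eventually_conj)
    then obtain T0 where T0: "\<And>T. T \<ge> T0 \<Longrightarrow> decay x T < e / M \<and> x \<le> T"
      by (auto simp: eventually_at_top_linorder)
    obtain T where T: "T \<ge> T0" "\<bar>y T\<bar> \<le> M" using M(2) by blast
    have "\<bar>decay x T * y T\<bar> \<le> decay x T * M"
      using T(2) decay_pos[of x T] by (simp add: abs_mult mult_left_mono)
    also have "\<dots> \<le> e / M * M"
      using T0[OF T(1)] M(1) by (intro mult_right_mono) auto
    finally have "\<bar>decay x T * y T\<bar> \<le> e" using M(1) by simp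
    then show "\<bar>y x\<bar> \<le> K powr (1 / conj_exp p) + e"
      using solution_representation[OF sol] forcing T0[OF T(1)] by fastforce
  qed
qed

end

locale locally_comparable_dfun = uniformly_positive_potential +
  fixes \<alpha> \<beta> X :: real
  assumes alpha_pos: "\<alpha> > 0" and beta_pos: "\<beta> > 0"
    and dfun_comparable: "\<And>x t. X \<le> \<bar>x\<bar> \<Longrightarrow> \<bar>t - x\<bar> \<le> \<beta> \<Longrightarrow> dfun q t \<le> \<alpha> * dfun q x"
begin

text \<open>Every window \<open>[c - \<alpha> d(x), c + \<alpha> d(x)]\<close> inside \<open>[x, x + \<beta>]\<close> contains
  \<open>[c - d(c), c + d(c)]\<close>, which carries mass 2.\<close>
lemma Q_increment_ge_local:
  assumes X: "X \<le> \<bar>x\<bar>" and t: "x \<le> t" "t \<le> x + \<beta>"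
  shows "(t - x) / (\<alpha> * dfun q x) - 2 \<le> Q t - Q x"
proof -
  define D where "D = \<alpha> * dfun q x"
  have D: "D > 0" using alpha_pos dfun_pos[of x] by (simp add: D_def)
  have "2 * ((t - x) / (2 * D) - 1) \<le> Q t - Q x"
  proof (rule Q_increment_ge_windows[OF _ _ _ t])
    fix u assume u: "x \<le> u" "u + 2 * D \<le> x + \<beta>"
    then have "dfun q (u + D) \<le> D"
      using D dfun_comparable[OF X, of "u + D"] by (simp add: D_def)
    then have "Q (u + D + dfun q (u + D)) \<le> Q (u + 2 * D)" "Q u \<le> Q (u + D - dfun q (u + D))"
      by (simp_all add: Q_mono)
    then show "2 \<le> Q (u + 2 * D) - Q u" using Q_dfun[of "u + D"] by simp
  qed (use D in auto)
  moreover have "2 * ((t - x) / (2 * D) - 1) = (t - x) / D - 2" using D by (simp add: field_simps)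
  ultimately show ?thesis by (simp add: D_def)
qed

text \<open>Beyond \<open>x + \<beta>\<close> the local rate applies up to \<open>x + \<beta>\<close> and the global rate after it;
  \<open>e\<^sup>-\<^sup>\<beta>\<^sup>/\<^sup>D \<le> D / \<beta>\<close> makes the second summand \<open>O(D)\<close> as well.\<close>
lemma decay_le_local_global:
  assumes X: "X \<le> \<bar>x\<bar>" and t: "x \<le> t"
  defines "D \<equiv> \<alpha> * dfun q x"
  shows "decay x t \<le> exp 2 * exp (- (1 / D) * (t - x))
                      + exp (2 + m + \<kappa> * \<beta>) / \<beta> * D * exp (- \<kappa> * (t - x))"
proof (cases "t \<le> x + \<beta>")
  case True
  have "decay x t \<le> exp 2 * exp (- (1 / D) * (t - x))"
    using Q_increment_ge_local[OF X t True] by (simp add: decay_def D_def flip: exp_add)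
  moreover have "0 \<le> exp (2 + m + \<kappa> * \<beta>) / \<beta> * D * exp (- \<kappa> * (t - x))"
    using alpha_pos dfun_pos[of x] beta_pos by (simp add: D_def)
  ultimately show ?thesis by linarith
next
  case False
  have D: "D > 0" using alpha_pos dfun_pos[of x] by (simp add: D_def)
  have "\<beta> / D - 2 \<le> Q (x + \<beta>) - Q x"
    using Q_increment_ge_local[OF X, of "x + \<beta>"] beta_pos by (simp add: D_def)
  moreover have "\<kappa> * (t - (x + \<beta>)) - m \<le> Q t - Q (x + \<beta>)"
    using False by (intro Q_increment_ge) simp
  ultimately have "decay x t \<le> exp ((2 + m + \<kappa> * \<beta>) + (- (\<beta> / D)) + (- \<kappa> * (t - x)))"
    unfolding decay_def by (simp add: algebra_simps)
  also have "\<dots> = exp (2 + m + \<kappa> * \<beta>) * exp (- (\<beta> / D)) * exp (- \<kappa> * (t - x))"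
    by (simp only: exp_add)
  also have "\<dots> \<le> exp (2 + m + \<kappa> * \<beta>) * (D / \<beta>) * exp (- \<kappa> * (t - x))"
  proof -
    have "exp (- (\<beta> / D)) \<le> D / \<beta>"
      using exp_ge_add_one_self[of "\<beta> / D"] beta_pos D by (simp add: exp_minus field_simps)
    then show ?thesis by (intro mult_right_mono mult_left_mono) auto
  qed
  finally have "decay x t \<le> exp (2 + m + \<kappa> * \<beta>) / \<beta> * D * exp (- \<kappa> * (t - x))"
    by simp
  moreover have "0 \<le> exp 2 * exp (- (1 / D) * (t - x))" by simp
  ultimately show ?thesis by linarith
qed

lemma integral_decay_le_far:
  assumes X: "X \<le> \<bar>x\<bar>" and xT: "x \<le> T"
  shows "integral {x..T} (decay x) \<le> \<alpha> * (exp 2 + exp (2 + m + \<kappa> * \<beta>) / \<beta> / \<kappa>) * dfun q x"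
proof -
  define D where "D = \<alpha> * dfun q x"
  have D: "D > 0" using alpha_pos dfun_pos[of x] by (simp add: D_def)
  define B where "B = exp (2 + m + \<kappa> * \<beta>) / \<beta>"
  have i1: "(\<lambda>t. exp (- (1 / D) * (t - x))) integrable_on {x..T}"
    and i2: "(\<lambda>t. exp (- \<kappa> * (t - x))) integrable_on {x..T}"
    using integral_exp_decay_le(1)[of "1 / D" x T] integral_exp_decay_le(1)[OF kappa_pos xT] D xT
    by simp_all
  have "integral {x..T} (decay x)
      \<le> integral {x..T} (\<lambda>t. exp 2 * exp (- (1 / D) * (t - x)) + B * D * exp (- \<kappa> * (t - x)))"
    using decay_le_local_global[OF X] alpha_pos beta_pos dfun_pos[of x]
    by (intro integral_le integrable_continuous_real continuous_on_decay)
       (auto simp: D_def B_def intro!: continuous_intros)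
  also have "\<dots> = exp 2 * integral {x..T} (\<lambda>t. exp (- (1 / D) * (t - x)))
      + B * D * integral {x..T} (\<lambda>t. exp (- \<kappa> * (t - x)))"
    using i1 i2 by (simp add: integral_add integrable_on_mult_right)
  also have "\<dots> \<le> exp 2 * D + B * D * (1 / \<kappa>)"
    using integral_exp_decay_le(2)[of "1 / D" x T] integral_exp_decay_le(2)[OF kappa_pos xT]
      D xT beta_pos
    by (intro add_mono mult_left_mono) (auto simp: B_def)
  finally show ?thesis by (simp add: D_def B_def algebra_simps)
qed

lemma integral_decay_le_dfun:
  obtains C where "C > 0" "\<And>x T. x \<le> T \<Longrightarrow> integral {x..T} (decay x) \<le> C * dfun q x"
proof -
  obtain \<delta> where \<delta>: "\<delta> > 0" "\<And>x. \<bar>x\<bar> \<le> X \<Longrightarrow> \<delta> \<le> dfun q x"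
    using dfun_bounded_below_on_compact by blast
  define C1 where "C1 = \<alpha> * (exp 2 + exp (2 + m + \<kappa> * \<beta>) / \<beta> / \<kappa>)"
  define C2 where "C2 = exp m / \<kappa> / \<delta>"
  have C: "C1 > 0" "C2 > 0"
    using alpha_pos beta_pos kappa_pos \<delta> by (simp_all add: C1_def C2_def add_pos_pos)
  have "integral {x..T} (decay x) \<le> (C1 + C2) * dfun q x" if xT: "x \<le> T" for x T
  proof (cases "X \<le> \<bar>x\<bar>")
    case True
    then have "integral {x..T} (decay x) \<le> C1 * dfun q x"
      using integral_decay_le_far[OF True xT] by (simp add: C1_def)
    then show ?thesis using C dfun_pos[of x] by (smt (verit) mult_right_mono)
  next
    case False
    have "integral {x..T} (decay x) \<le> C2 * \<delta>"
      using integral_decay_le[OF xT] \<delta> by (simp add: C2_def)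
    also have "\<dots> \<le> C2 * dfun q x" using \<delta>(2)[of x] False C by simp
    finally show ?thesis using C dfun_pos[of x] by (smt (verit) mult_right_mono)
  qed
  then show ?thesis using C by (intro that[of "C1 + C2"]) auto
qed

end

section \<open>The lower bound\<close>

lemma is_solution_cmult:
  "is_solution q f y \<Longrightarrow> is_solution q (\<lambda>t. c * f t) (\<lambda>t. c * y t)"
  unfolding is_solution_iff_loc_primitive
  by (drule loc_primitive_cmult[where c = c]) (simp add: loc_primitive_cong algebra_simps)

context uniformly_positive_potential
begin

definition tent :: "real \<Rightarrow> real \<Rightarrow> real" where
  "tent x t = max 0 (min (t - x) (x + dfun q x - t))"

definition tent_tail :: "real \<Rightarrow> real \<Rightarrow> real" where
  "tent_tail x t = indef_integral (tent x) (x + dfun q x) - indef_integral (tent x) t"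

definition growth :: "real \<Rightarrow> real \<Rightarrow> real" where
  "growth x t = exp (Q t - Q x)"

definition test_forcing :: "real \<Rightarrow> real \<Rightarrow> real" where
  "test_forcing x t = growth x t * tent x t"

definition test_solution :: "real \<Rightarrow> real \<Rightarrow> real" where
  "test_solution x t = growth x t * tent_tail x t"

lemma continuous_on_tent: "continuous_on S (tent x)"
  unfolding tent_def by (intro continuous_intros)

lemma tent_nonneg: "0 \<le> tent x t"
  by (simp add: tent_def)

lemma tent_le: "tent x t \<le> dfun q x / 2"
  unfolding tent_def using dfun_pos[of x] by (auto simp: max_def min_def)

lemma tent_outside: "t \<notin> {x..x + dfun q x} \<Longrightarrow> tent x t = 0"
  by (auto simp: tent_def max_def min_def)

lemma tent_middle:
  "x + dfun q x / 4 \<le> t \<Longrightarrow> t \<le> x + 3 * dfun q x / 4 \<Longrightarrow> dfun q x / 4 \<le> tent x t"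
  by (auto simp: tent_def max_def min_def)

lemma tent_tail_increment: "s \<le> t \<Longrightarrow> tent_tail x t - tent_tail x s = - integral {s..t} (tent x)"
  using loc_primitiveD(2)[OF loc_primitive_indef_integral, of "tent x" s t]
    absolutely_integrable_continuous_real[OF continuous_on_tent]
  by (simp add: tent_tail_def)

lemma loc_primitive_tent_tail: "loc_primitive (tent_tail x) (\<lambda>t. - tent x t)"
proof -
  have "loc_primitive (\<lambda>t. indef_integral (tent x) (x + dfun q x) + (-1) * indef_integral (tent x) t)
      (\<lambda>t. 0 + (-1) * tent x t)"
    by (intro loc_primitive_add loc_primitive_const loc_primitive_cmult loc_primitive_indef_integral
        absolutely_integrable_continuous_real continuous_on_tent)
  then show ?thesis by (rule loc_primitive_cong) (simp_all add: tent_tail_def)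
qed

lemma tent_tail_antimono: "s \<le> t \<Longrightarrow> tent_tail x t \<le> tent_tail x s"
  using tent_tail_increment[of s t x]
    integral_nonneg[OF integrable_continuous_real[OF continuous_on_tent] tent_nonneg, of s t x]
  by simp

lemma tent_tail_left:
  assumes "t \<le> x" shows "tent_tail x t = tent_tail x x"
proof -
  have "integral {t..x} (tent x) = integral {t..x} (\<lambda>_. 0)"
    using tent_outside[of _ x] dfun_pos[of x] by (intro integral_cong) (auto simp: tent_def)
  then show ?thesis using tent_tail_increment[OF assms, of x] by simp
qed

lemma tent_tail_right:
  assumes "x + dfun q x \<le> t" shows "tent_tail x t = 0"
proof -
  have "integral {x + dfun q x..t} (tent x) = integral {x + dfun q x..t} (\<lambda>_. 0)"
    using tent_outside[of _ x] by (intro integral_cong) (auto simp: tent_def)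
  then show ?thesis using tent_tail_increment[OF assms, of x] by (simp add: tent_tail_def)
qed

lemma tent_tail_nonneg: "0 \<le> tent_tail x t"
  using tent_tail_antimono[of t "x + dfun q x" x] tent_tail_right[of x t]
    tent_tail_right[of x "x + dfun q x"]
  by (cases "t \<le> x + dfun q x") auto

lemma tent_tail_le: "tent_tail x t \<le> tent_tail x x"
  using tent_tail_antimono[of x t x] tent_tail_left[of t x] by (cases "x \<le> t") auto

lemma tent_tail_self_ge: "dfun q x ^ 2 / 8 \<le> tent_tail x x"
proof -
  define d where "d = dfun q x"
  have d: "d > 0" using dfun_pos by (simp add: d_def)
  have ti: "tent x integrable_on {u..v}" for u v
    by (rule integrable_continuous_real[OF continuous_on_tent])
  have "d ^ 2 / 8 = integral {x + d / 4..x + 3 * d / 4} (\<lambda>t. d / 4)"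
    using d by (simp add: power2_eq_square field_simps)
  also have "\<dots> \<le> integral {x + d / 4..x + 3 * d / 4} (tent x)"
    using tent_middle by (intro integral_le[OF integrable_const_ivl ti]) (auto simp: d_def)
  also have "\<dots> \<le> integral {x..x + d} (tent x)"
    using d tent_nonneg by (intro integral_subset_le[OF _ ti ti]) auto
  also have "\<dots> = tent_tail x x"
    using tent_tail_increment[of x "x + d" x] tent_tail_right[of x "x + d"] d by (simp add: d_def)
  finally show ?thesis by (simp add: d_def)
qed

lemma growth_pos: "0 < growth x t"
  by (simp add: growth_def)

lemma growth_ge_1: "x \<le> t \<Longrightarrow> 1 \<le> growth x t"
  by (simp add: growth_def Q_mono)

lemma growth_le_exp2: "t \<le> x + dfun q x \<Longrightarrow> growth x t \<le> exp 2"
  using Q_mono[of t "x + dfun q x"] Q_mono[of "x - dfun q x" x] Q_dfun[of x] dfun_pos[of x]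
  by (simp add: growth_def)

lemma growth_le_exp_left:
  assumes "t \<le> x + dfun q x" shows "growth x t \<le> exp (2 + m + \<kappa> * (t - x))"
proof (cases "t \<le> x")
  case True
  then have "Q t - Q x \<le> 2 + m + \<kappa> * (t - x)"
    using Q_increment_ge[OF True] m_pos by (simp add: right_diff_distrib)
  then show ?thesis by (simp add: growth_def)
next
  case False
  then show ?thesis
    using growth_le_exp2[OF assms] m_pos kappa_pos by (smt (verit) exp_le_cancel_iff mult_pos_pos)
qed

lemma loc_primitive_growth: "loc_primitive (growth x) (\<lambda>t. q t * growth x t)"
proof -
  have "loc_primitive (\<lambda>t. Q t + (- Q x)) (\<lambda>t. q t + 0)"
    by (intro loc_primitive_add loc_primitive_const loc_primitive_Q)
  from loc_primitive_exp[OF this] show ?thesis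
    by (rule loc_primitive_cong) (simp_all add: growth_def)
qed

lemma is_solution_test: "is_solution q (test_forcing x) (test_solution x)"
proof -
  have "loc_primitive (test_solution x)
      (\<lambda>t. q t * growth x t * tent_tail x t + growth x t * - tent x t)"
    using loc_primitive_mult[OF loc_primitive_growth loc_primitive_tent_tail]
    by (simp add: test_solution_def[abs_def])
  then show ?thesis unfolding is_solution_iff_loc_primitive
    by (rule loc_primitive_cong) (simp_all add: test_solution_def test_forcing_def algebra_simps)
qed

lemma continuous_on_test_forcing: "continuous_on S (test_forcing x)"
  unfolding test_forcing_def[abs_def]
  by (intro continuous_intros continuous_on_tent continuous_on_loc_primitive[OF loc_primitive_growth])

lemma continuous_on_test_solution: "continuous_on S (test_solution x)"
  by (rule continuous_on_loc_primitive[OF is_solution_test[unfolded is_solution_iff_loc_primitive]])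

lemma test_forcing_nonneg: "0 \<le> test_forcing x t"
  by (simp add: test_forcing_def growth_pos tent_nonneg less_imp_le)

lemma test_forcing_outside: "t \<notin> {x..x + dfun q x} \<Longrightarrow> test_forcing x t = 0"
  by (simp add: test_forcing_def tent_outside)

lemma test_forcing_le: "test_forcing x t \<le> exp 2 * (dfun q x / 2)"
proof (cases "t \<in> {x..x + dfun q x}")
  case True
  then show ?thesis unfolding test_forcing_def
    using growth_pos[of x t] tent_nonneg[of x t] by (intro mult_mono growth_le_exp2 tent_le) auto
next
  case False
  then show ?thesis using dfun_pos[of x] by (simp add: test_forcing_outside)
qed

lemma test_forcing_middle:
  assumes "x + dfun q x / 4 \<le> t" "t \<le> x + 3 * dfun q x / 4"
  shows "dfun q x / 4 \<le> test_forcing x t"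
proof -
  have "1 * (dfun q x / 4) \<le> growth x t * tent x t"
    using assms dfun_pos[of x] growth_pos[of x t]
    by (intro mult_mono growth_ge_1 tent_middle) auto
  then show ?thesis by (simp add: test_forcing_def)
qed

lemma test_solution_nonneg: "0 \<le> test_solution x t"
  by (simp add: test_solution_def growth_pos tent_tail_nonneg less_imp_le)

lemma test_solution_self: "test_solution x x = tent_tail x x"
  by (simp add: test_solution_def growth_def)

lemma test_solution_le_exp:
  "test_solution x t \<le> tent_tail x x * exp (2 + m + \<kappa> * dfun q x)
                        * (indicator {..x + dfun q x} t * exp (\<kappa> * (t - (x + dfun q x))))"
proof (cases "t \<le> x + dfun q x")
  case True
  have "test_solution x t \<le> exp (2 + m + \<kappa> * (t - x)) * tent_tail x x"
    unfolding test_solution_def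
    using growth_le_exp_left[OF True] tent_tail_le tent_tail_nonneg by (intro mult_mono) auto
  also have "exp (2 + m + \<kappa> * (t - x)) = exp (2 + m + \<kappa> * dfun q x) * exp (\<kappa> * (t - (x + dfun q x)))"
    by (simp flip: exp_add add: algebra_simps)
  finally show ?thesis using True by (simp add: mult_ac)
qed (simp add: test_solution_def tent_tail_right)

lemma test_solution_le_exp2: "test_solution x t \<le> exp 2 * tent_tail x x"
proof (cases "t \<le> x + dfun q x")
  case True
  then show ?thesis unfolding test_solution_def
    using growth_pos[of x t] tent_tail_nonneg by (intro mult_mono growth_le_exp2 tent_tail_le) auto
qed (simp add: test_solution_def tent_tail_right tent_tail_nonneg)

end

context uniformly_positive_potential
begin

lemma in_Lp_test_forcing:
  assumes p: "p > 1" shows "in_Lp p (test_forcing x)"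
proof (cases p)
  case PInf
  have "\<bar>test_forcing x t\<bar> \<le> exp 2 * (dfun q x / 2)" for t
    using test_forcing_le test_forcing_nonneg by simp
  then have "bounded (range (test_forcing x))" unfolding bounded_iff real_norm_def by blast
  then show ?thesis using PInf continuous_on_test_forcing by (simp add: in_Lp_def)
next
  case (real r)
  with p have r: "r > 0" by simp
  have "continuous_on {x..x + dfun q x} (\<lambda>t. \<bar>test_forcing x t\<bar> powr r)"
    using r by (intro continuous_on_powr' continuous_intros continuous_on_test_forcing) auto
  then have "integrable lebesgue (\<lambda>t. \<bar>test_forcing x t\<bar> powr r)"
    by (rule integrable_lebesgue_if_continuous_vanishing_outside) (simp add: test_forcing_outside)
  then show ?thesis
    using real borel_measurable_lebesgue_continuous[OF continuous_on_test_forcing]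
    by (simp add: in_Lp_def)
qed (use p in simp)

lemma in_Lp_test_solution:
  assumes p: "p > 1" shows "in_Lp p (test_solution x)"
proof (cases p)
  case PInf
  have "\<bar>test_solution x t\<bar> \<le> exp 2 * tent_tail x x" for t
    using test_solution_le_exp2 test_solution_nonneg by simp
  then have "bounded (range (test_solution x))" unfolding bounded_iff real_norm_def by blast
  then show ?thesis using PInf continuous_on_test_solution by (simp add: in_Lp_def)
next
  case (real r)
  with p have r: "r > 0" by simp
  define S where "S = tent_tail x x * exp (2 + m + \<kappa> * dfun q x)"
  have S: "0 \<le> S" using tent_tail_nonneg by (simp add: S_def)
  define b where "b = x + dfun q x"
  have "integrable lebesgue (\<lambda>t. \<bar>test_solution x t\<bar> powr r)"
  proof (rule Bochner_Integration.integrable_bound)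
    show "integrable lebesgue (\<lambda>t. S powr r * (indicator {..b} t * exp ((r * \<kappa>) * (t - b))))"
      using integrable_exp_left_tail[of "r * \<kappa>" b] r kappa_pos by simp
    show "(\<lambda>t. \<bar>test_solution x t\<bar> powr r) \<in> borel_measurable lebesgue"
      using r by (intro borel_measurable_lebesgue_continuous continuous_on_powr' continuous_intros
          continuous_on_test_solution) auto
    have "\<bar>test_solution x t\<bar> powr r \<le> S powr r * (indicator {..b} t * exp ((r * \<kappa>) * (t - b)))" for t
    proof (cases "t \<le> b")
      case True
      have "\<bar>test_solution x t\<bar> powr r \<le> (S * exp (\<kappa> * (t - b))) powr r"
        using test_solution_le_exp[of x t] test_solution_nonneg[of x t] True r
        by (intro powr_mono2) (auto simp: S_def b_def)
      also have "\<dots> = S powr r * exp ((r * \<kappa>) * (t - b))"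
        using S by (simp add: powr_mult exp_powr_real mult_ac)
      finally show ?thesis using True by simp
    next
      case False
      then show ?thesis using test_solution_le_exp[of x t] test_solution_nonneg[of x t] r
        by (simp add: b_def)
    qed
    then show "AE t in lebesgue. norm (\<bar>test_solution x t\<bar> powr r)
        \<le> norm (S powr r * (indicator {..b} t * exp ((r * \<kappa>) * (t - b))))"
      using S by simp
  qed
  then show ?thesis
    using real borel_measurable_lebesgue_continuous[OF continuous_on_test_solution]
    by (simp add: in_Lp_def)
qed (use p in simp)

lemma integral_test_forcing_powr:
  assumes r: "r > 0"
  shows "0 < integral {x..x + dfun q x} (\<lambda>t. test_forcing x t powr r)"
    and "integral {x..x + dfun q x} (\<lambda>t. test_forcing x t powr r)
           \<le> (exp 2 * (dfun q x / 2)) powr r * dfun q x"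
proof -
  define d where "d = dfun q x"
  have d: "d > 0" using dfun_pos by (simp add: d_def)
  define h where "h t = test_forcing x t powr r" for t
  have hi: "h integrable_on {u..v}" for u v
    unfolding h_def using r test_forcing_nonneg
    by (intro integrable_continuous_real continuous_on_powr' continuous_intros
        continuous_on_test_forcing) auto
  have "0 < (d / 4) powr r * (d / 2)" using d by simp
  also have "\<dots> = integral {x + d / 4..x + 3 * d / 4} (\<lambda>t. (d / 4) powr r)"
    using d by (simp add: field_simps)
  also have "\<dots> \<le> integral {x + d / 4..x + 3 * d / 4} h"
    using test_forcing_middle[of x] d r
    by (intro integral_le[OF integrable_const_ivl hi]) (auto simp: h_def d_def intro: powr_mono2)
  also have "\<dots> \<le> integral {x..x + d} h"
    using d test_forcing_nonneg by (intro integral_subset_le[OF _ hi hi]) (auto simp: h_def)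
  finally show "0 < integral {x..x + dfun q x} (\<lambda>t. test_forcing x t powr r)"
    by (simp add: h_def[abs_def] d_def)
  have "integral {x..x + d} h \<le> integral {x..x + d} (\<lambda>t. (exp 2 * (d / 2)) powr r)"
    using test_forcing_le test_forcing_nonneg r
    by (intro integral_le[OF hi integrable_const_ivl]) (auto simp: h_def d_def intro: powr_mono2)
  then show "integral {x..x + dfun q x} (\<lambda>t. test_forcing x t powr r)
      \<le> (exp 2 * (dfun q x / 2)) powr r * dfun q x"
    using d by (simp add: h_def[abs_def] d_def mult.commute)
qed

lemma Lp_norm_test_forcing:
  assumes p: "p > 1"
  shows "0 < Lp_norm p (test_forcing x)"
    and "Lp_norm p (test_forcing x) \<le> exp 2 * (dfun q x / 2) * dfun q x powr (1 - 1 / conj_exp p)"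
proof -
  define d where "d = dfun q x"
  have d: "d > 0" using dfun_pos by (simp add: d_def)
  have "0 < Lp_norm p (test_forcing x)
      \<and> Lp_norm p (test_forcing x) \<le> exp 2 * (d / 2) * d powr (1 - 1 / conj_exp p)"
  proof (cases p)
    case PInf
    have "0 < d / 4" using d by simp
    also have "d / 4 \<le> \<bar>test_forcing x (x + d / 2)\<bar>"
      using test_forcing_middle[of x "x + d / 2"] d by (simp add: d_def)
    also have "\<dots> \<le> Lp_norm \<infinity> (test_forcing x)"
      by (rule abs_le_Lp_norm_infinity[OF in_Lp_test_forcing]) simp
    finally have "0 < Lp_norm \<infinity> (test_forcing x)" .
    moreover have "(SUP t. \<bar>test_forcing x t\<bar>) \<le> exp 2 * (d / 2)"
      using test_forcing_le test_forcing_nonneg by (intro cSUP_least) (auto simp: d_def)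
    ultimately show ?thesis using PInf d by (simp add: conj_exp_def Lp_norm_def)
  next
    case (real r)
    with p have r: "r > 1" by simp
    define I where "I = integral {x..x + d} (\<lambda>t. test_forcing x t powr r)"
    have "continuous_on {x..x + d} (\<lambda>t. \<bar>test_forcing x t\<bar> powr r)"
      using r by (intro continuous_on_powr' continuous_intros continuous_on_test_forcing) auto
    then have "(LINT t|lebesgue. \<bar>test_forcing x t\<bar> powr r)
        = integral {x..x + d} (\<lambda>t. \<bar>test_forcing x t\<bar> powr r)"
      by (rule integrable_lebesgue_if_continuous_vanishing_outside(2))
         (simp add: test_forcing_outside d_def)
    also have "\<dots> = I" using test_forcing_nonneg by (simp add: I_def)
    finally have LINT: "(LINT t|lebesgue. \<bar>test_forcing x t\<bar> powr r) = I" .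
    have I: "0 < I" "I \<le> (exp 2 * (d / 2)) powr r * d"
      using integral_test_forcing_powr[of r x] r by (simp_all add: I_def d_def)
    have "I powr (1 / r) \<le> ((exp 2 * (d / 2)) powr r * d) powr (1 / r)"
      using I r by (intro powr_mono2) auto
    also have "\<dots> = exp 2 * (d / 2) * d powr (1 - 1 / conj_exp p)"
      using d r real by (simp add: powr_mult powr_powr conj_exp_def field_simps)
    finally show ?thesis using I LINT real by (simp add: Lp_norm_def)
  qed (use p in simp)
  then show "0 < Lp_norm p (test_forcing x)"
    and "Lp_norm p (test_forcing x) \<le> exp 2 * (dfun q x / 2) * dfun q x powr (1 - 1 / conj_exp p)"
    by (simp_all add: d_def)
qed

lemma solution_abs_ge:
  assumes p: "p > 1"
  obtains y where "y \<in> Dset p q" "inverse (4 * exp 2) * dfun q x powr (1 / conj_exp p) \<le> \<bar>y x\<bar>"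
proof -
  define d where "d = dfun q x"
  have d: "d > 0" using dfun_pos by (simp add: d_def)
  define N where "N = Lp_norm p (test_forcing x)"
  have N: "0 < N" "N \<le> exp 2 * (d / 2) * d powr (1 - 1 / conj_exp p)"
    using Lp_norm_test_forcing[OF p] by (simp_all add: N_def d_def)
  define y where "y t = inverse N * test_solution x t" for t
  have "y \<in> Dset p q"
    unfolding Dset_def
  proof (intro CollectI conjI exI)
    show "in_Lp p y" unfolding y_def using N by (intro in_Lp_cmult[OF p] in_Lp_test_solution[OF p]) auto
    show "in_Lp p (\<lambda>t. inverse N * test_forcing x t)"
      using N by (intro in_Lp_cmult[OF p] in_Lp_test_forcing[OF p]) auto
    show "Lp_norm p (\<lambda>t. inverse N * test_forcing x t) = 1"
      using N Lp_norm_cmult[OF p _ in_Lp_test_forcing[OF p]] by (simp add: N_def)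
    show "is_solution q (\<lambda>t. inverse N * test_forcing x t) y"
      unfolding y_def by (rule is_solution_cmult[OF is_solution_test])
  qed
  moreover have "inverse (4 * exp 2) * d powr (1 / conj_exp p) \<le> \<bar>y x\<bar>"
  proof -
    have "inverse (4 * exp 2) * d powr (1 / conj_exp p)
        = (d ^ 2 / 8) / (exp 2 * (d / 2) * d powr (1 - 1 / conj_exp p))"
      using d by (simp add: powr_diff power2_eq_square field_simps)
    also have "\<dots> \<le> tent_tail x x / N"
      using tent_tail_self_ge[of x] tent_tail_nonneg[of x x] N d by (intro frac_le) (auto simp: d_def)
    also have "\<dots> = \<bar>y x\<bar>"
      using N tent_tail_nonneg[of x x] by (simp add: y_def test_solution_self field_simps)
    finally show ?thesis .
  qed
  ultimately show ?thesis using that by (simp add: d_def)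
qed

end

theorem theorem1p5:
  fixes q :: "real \<Rightarrow> real" and a \<alpha> \<beta> X :: real
  assumes q_nonneg: "\<And>t. q t \<ge> 0"
    and q_loc: "\<And>u v. q absolutely_integrable_on {u..v}"
    and a_pos: "a > 0"
    and inf_pos: "(INF x. integral {x - a..x + a} q) > 0"
    and alpha: "\<alpha> \<ge> 1" and beta: "\<beta> > 0" and Xpos: "X > 0"
    and dcomp: "\<And>x t. \<bar>x\<bar> \<ge> X \<Longrightarrow> \<bar>t - x\<bar> \<le> \<beta> \<Longrightarrow>
                  1 / \<alpha> \<le> dfun q t / dfun q x \<and> dfun q t / dfun q x \<le> \<alpha>"
  shows "\<exists>c>0. \<forall>p::ereal. p > 1 \<longrightarrow> (\<exists>cp>0. \<forall>x.
           ereal (inverse c * dfun q x powr (1 / conj_exp p)) \<le> Gfun p q x \<and>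
           Gfun p q x \<le> ereal (cp * dfun q x powr (1 / conj_exp p)))"
proof -
  interpret uniformly_positive_potential q a
    using q_nonneg q_loc a_pos inf_pos by unfold_locales
  interpret locally_comparable_dfun q a \<alpha> \<beta> X
    using alpha beta dcomp dfun_pos by unfold_locales (auto simp: divide_le_eq)
  obtain C where C: "C > 0" "\<And>x T. x \<le> T \<Longrightarrow> integral {x..T} (decay x) \<le> C * dfun q x"
    using integral_decay_le_dfun by blast
  show ?thesis
  proof (rule exI[of _ "4 * exp 2"], intro conjI allI impI)
    fix p :: ereal assume p: "p > 1"
    have "ereal (inverse (4 * exp 2) * dfun q x powr (1 / conj_exp p)) \<le> Gfun p q x" for x
      using solution_abs_ge[OF p, of x] unfolding Gfun_def by (metis SUP_upper2 ereal_less_eq(3))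
    moreover have "Gfun p q x \<le> ereal (C powr (1 / conj_exp p) * dfun q x powr (1 / conj_exp p))" for x
      using solution_abs_le[OF p _ _ C(2)] C(1) dfun_pos[of x]
      unfolding Gfun_def by (intro SUP_least) (simp add: powr_mult)
    ultimately show "\<exists>cp>0. \<forall>x. ereal (inverse (4 * exp 2) * dfun q x powr (1 / conj_exp p)) \<le> Gfun p q x
        \<and> Gfun p q x \<le> ereal (cp * dfun q x powr (1 / conj_exp p))"
      using C(1) by (intro exI[of _ "C powr (1 / conj_exp p)"]) auto
  qed simp
qed

end
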